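(* Let $S=\langle n_k\rangle_{k=1}^{3m}$ be an instance of 3-Partition (with $n_1\ge\cdots\ge n_{3m}$) and let $\mathrm{Ver}_S$, $w_S$ be as defined below. If $\langle i_k\rangle_{k=1}^{3m}$ is a permutation (reordering) of $\langle n_k\rangle_{k=1}^{3m}$, then the configuration $\prod_{k=1}^{3m}(a_1b^{i_k}a_2)\,\|\,\mathrm{Ver}_S$ is accepted. Consequently, if $S$ is a "yes" instance of 3-Partition, then $\varepsilon\,\|\,w_S\vdash^*\varepsilon\,\|\,\varepsilon$ and $w_S$ is a square.
   Context: Queue automaton: a configuration is written $Q\,\|\,x$ ($Q$ = queue contents, $x$ = remaining input); a step from $Q\,\|\,\sigma x$ ($\sigma$ a symbol) goes either to $Q\sigma\,\|\,x$ (push) or, if $Q=\sigma Q'$, to $Q'\,\|\,x$ (match/pop). $\vdash^*$ is zero or more steps; $\varepsilon$ is the empty string; a configuration $C$ is accepted if $C\vdash^*\varepsilon\,\|\,\varepsilon$. A string $w$ is a square if it is a shuffle of some string $u$ with itself, i.e. there are strings $x_i,y_i$ with $u=x_1\cdots x_k=y_1\cdots y_k$ and $w=x_1y_1\cdots x_ky_k$. An instance of 3-Partition is a sequence $S=\langle n_i:1\le i\le 3m\rangle$ of natural numbers such that $B=(\sum_{i=1}^{3m}n_i)/m$ is an integer and $B/4<n_i<B/2$ for all $i$; it is a "yes" instance if it can be partitioned into $m$ disjoint subsequences each having exactly three elements summing to $B$. Throughout, the $n_i$ are assumed to be in non-increasing order. The alphabet is $\{a_1,a_2,b,e_0,e,c_1,c_2,x,y\}$;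 $u^i$ denotes $i$ concatenated copies of $u$ and $\prod_{\ell=1}^k u_\ell=u_1u_2\cdots u_k$. Define $U_\ell=a_1^2b^\ell a_2^2$, $v_\ell=c_1x^\ell y^\ell c_2$, $D_k=U_{n_k}^{3m-k+1}$, $E_k=U_B^{3m-k}\,a_1b^{n_k}a_2\,U_B^{3m-k}$, $F_k=U_B^{2(3m-k)}$, and $\mathrm{Load}_S=e_0\prod_{i=1}^m(b^{2B}e)$, $\mathrm{Dist}_S=e_0\prod_{i=1}^m((a_1b^Ba_2)^3e)$, $\mathrm{Ver}_S=\prod_{k=1}^{3m}[v_{4k-3}D_kv_{4k-3}\,v_{4k-2}D_kv_{4k-2}\,v_{4k-1}E_kv_{4k-1}\,v_{4k}F_kv_{4k}]$, and $w_S=\mathrm{Load}_S\mathrm{Dist}_S\mathrm{Ver}_S$. *)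

theory Defs
  imports Complex_Main "HOL-Library.Multiset"
begin

datatype sym = Sa1 | Sa2 | Sb | Se0 | Se | Sc1 | Sc2 | Sx | Sy

text \<open>Queue automaton configurations (Q, x): queue contents Q, remaining input x.
  One step from Q || s x: push to Q s || x, or, if Q = s Q', pop to Q' || x.\<close>
inductive qstep :: "sym list \<times> sym list \<Rightarrow> sym list \<times> sym list \<Rightarrow> bool" where
  push: "qstep (Q, s # x) (Q @ [s], x)"
| pop:  "qstep (s # Q, s # x) (Q, x)"

definition accepted :: "sym list \<times> sym list \<Rightarrow> bool" where
  "accepted C \<longleftrightarrow> qstep\<^sup>*\<^sup>* C ([], [])"

text \<open>w is a square: a shuffle x1 y1 ... xk yk of u with itself,
  u = x1...xk = y1...yk.\<close>
definition is_square :: "'a list \<Rightarrow> bool" where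
  "is_square w \<longleftrightarrow> (\<exists>u xs ys. length xs = length ys \<and> concat xs = u \<and> concat ys = u
      \<and> w = concat (map2 (@) xs ys))"

definition pw :: "'a list \<Rightarrow> nat \<Rightarrow> 'a list" where
  "pw u i = concat (replicate i u)"

text \<open>3-Partition. The instance is the list ns = [n_1,...,n_{3m}] (so n_k = ns ! (k-1)).\<close>
definition tp_B :: "nat \<Rightarrow> nat list \<Rightarrow> nat" where
  "tp_B m ns = sum_list ns div m"

definition three_partition_instance :: "nat \<Rightarrow> nat list \<Rightarrow> bool" where
  "three_partition_instance m ns \<longleftrightarrow>
     0 < m \<and> length ns = 3 * m \<and> m dvd sum_list ns \<and>
     (\<forall>n\<in>set ns. real (tp_B m ns) / 4 < real n \<and> real n < real (tp_B m ns) / 2)"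

definition three_partition_yes :: "nat \<Rightarrow> nat list \<Rightarrow> bool" where
  "three_partition_yes m ns \<longleftrightarrow> three_partition_instance m ns \<and>
     (\<exists>f :: nat \<Rightarrow> nat. (\<forall>i < 3 * m. f i < m) \<and>
        (\<forall>j < m. card {i. i < 3 * m \<and> f i = j} = 3 \<and>
                 (\<Sum>i\<in>{i. i < 3 * m \<and> f i = j}. ns ! i) = tp_B m ns))"

definition U :: "nat \<Rightarrow> sym list" where
  "U l = [Sa1, Sa1] @ replicate l Sb @ [Sa2, Sa2]"

definition vv :: "nat \<Rightarrow> sym list" where
  "vv l = [Sc1] @ replicate l Sx @ replicate l Sy @ [Sc2]"

definition blk :: "nat \<Rightarrow> sym list" where
  "blk l = [Sa1] @ replicate l Sb @ [Sa2]"

definition Dk :: "nat \<Rightarrow> nat list \<Rightarrow> nat \<Rightarrow> sym list" where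
  "Dk m ns k = pw (U (ns ! (k - 1))) (3 * m - k + 1)"

definition Ek :: "nat \<Rightarrow> nat list \<Rightarrow> nat \<Rightarrow> sym list" where
  "Ek m ns k = pw (U (tp_B m ns)) (3 * m - k) @ blk (ns ! (k - 1)) @ pw (U (tp_B m ns)) (3 * m - k)"

definition Fk :: "nat \<Rightarrow> nat list \<Rightarrow> nat \<Rightarrow> sym list" where
  "Fk m ns k = pw (U (tp_B m ns)) (2 * (3 * m - k))"

definition Load :: "nat \<Rightarrow> nat list \<Rightarrow> sym list" where
  "Load m ns = Se0 # concat (replicate m (replicate (2 * tp_B m ns) Sb @ [Se]))"

definition Dist :: "nat \<Rightarrow> nat list \<Rightarrow> sym list" where
  "Dist m ns = Se0 # concat (replicate m (pw (blk (tp_B m ns)) 3 @ [Se]))"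

definition Ver :: "nat \<Rightarrow> nat list \<Rightarrow> sym list" where
  "Ver m ns = concat (map (\<lambda>k.
       vv (4*k-3) @ Dk m ns k @ vv (4*k-3) @
       vv (4*k-2) @ Dk m ns k @ vv (4*k-2) @
       vv (4*k-1) @ Ek m ns k @ vv (4*k-1) @
       vv (4*k) @ Fk m ns k @ vv (4*k)) [1..<3 * m + 1])"

definition wS :: "nat \<Rightarrow> nat list \<Rightarrow> sym list" where
  "wS m ns = Load m ns @ Dist m ns @ Ver m ns"

end

theory Submission
  imports Defs
begin

text \<open>Reading U_l = a1 a1 b^l a2 a2 while the block a1 b^i a2 heads the queue pops that block
  and pushes a1 b^(l-i) a2, i.e. it complements the block with respect to l. Round k of Ver_S
  complements all queued blocks with respect to n_k twice, then uses E_k to pop one block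
  a1 b^(n_k) a2 while complementing the others with respect to B, and F_k to undo that; the
  guards v_j around each phase force the whole queue through it. Since the n_k are
  non-increasing, n_k is the maximum of the blocks still queued, so every complement is
  defined and round k removes exactly n_k. For a yes instance, Load_S queues b^(2B) e once per
  triple and Dist_S fills three blocks a1 b^B a2 out of it, which leaves the blocks of a
  permutation of S in the queue. Finally, splitting an accepting run into its pushes and pops
  exhibits the input as a shuffle of the pushed word with itself.\<close>

abbreviation blocks :: "nat list \<Rightarrow> sym list" where
  "blocks xs \<equiv> concat (map blk xs)"

definition transduces :: "sym list \<Rightarrow> sym list \<Rightarrow> sym list \<Rightarrow> bool" where
  "transduces w Q Q' \<longleftrightarrow> (\<forall>R rest. qstep\<^sup>*\<^sup>* (Q @ R, w @ rest) (R @ Q', rest))"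

definition runs :: "sym list \<Rightarrow> sym list \<Rightarrow> sym list \<Rightarrow> bool" where
  "runs w Q Q' \<longleftrightarrow> (\<forall>rest. qstep\<^sup>*\<^sup>* (Q, w @ rest) (Q', rest))"

lemma transduces_append:
  assumes "transduces w1 Q1 Q1'" and "transduces w2 Q2 Q2'"
  shows "transduces (w1 @ w2) (Q1 @ Q2) (Q1' @ Q2')"
  unfolding transduces_def
proof (intro allI)
  fix R rest
  have "qstep\<^sup>*\<^sup>* (Q1 @ (Q2 @ R), w1 @ (w2 @ rest)) ((Q2 @ R) @ Q1', w2 @ rest)"
    using assms(1) unfolding transduces_def by blast
  also have "qstep\<^sup>*\<^sup>* \<dots> ((R @ Q1') @ Q2', rest)"
    using assms(2) unfolding transduces_def by (metis append.assoc)
  finally show "qstep\<^sup>*\<^sup>* ((Q1 @ Q2) @ R, (w1 @ w2) @ rest) (R @ Q1' @ Q2', rest)"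
    by simp
qed

lemma transduces_Nil: "transduces [] [] []"
  unfolding transduces_def by simp

lemma transduces_push_all: "transduces xs [] xs"
proof (induction xs)
  case (Cons x xs)
  have "transduces [x] [] [x]"
    unfolding transduces_def by (auto intro: qstep.push)
  from transduces_append[OF this Cons] show ?case by simp
qed (rule transduces_Nil)

lemma transduces_pop_all: "transduces xs xs []"
proof (induction xs)
  case (Cons x xs)
  have "transduces [x] [x] []"
    unfolding transduces_def by (auto intro: qstep.pop)
  from transduces_append[OF this Cons] show ?case by simp
qed (rule transduces_Nil)

lemma transduces_concat_map:
  "(\<And>x. x \<in> set xs \<Longrightarrow> transduces (f x) (g x) (h x)) \<Longrightarrow>
   transduces (concat (map f xs)) (concat (map g xs)) (concat (map h xs))"
  by (induction xs) (simp_all add: transduces_Nil transduces_append)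

lemma runs_of_transduces: "transduces w Q Q' \<Longrightarrow> runs w Q Q'"
  unfolding transduces_def runs_def by (metis append_Nil2 self_append_conv2)

lemma runs_append: "runs w1 Q1 Q2 \<Longrightarrow> runs w2 Q2 Q3 \<Longrightarrow> runs (w1 @ w2) Q1 Q3"
  unfolding runs_def by (metis append.assoc rtranclp_trans)

text \<open>v is pushed behind the queue, w is processed in front of it, and v is popped again.\<close>
lemma runs_enclosed:
  assumes "transduces w Q Q'"
  shows "runs (v @ w @ v) Q Q'"
  unfolding runs_def
proof
  fix rest
  have "qstep\<^sup>*\<^sup>* ([] @ Q, v @ (w @ v @ rest)) (Q @ v, w @ v @ rest)"
    using transduces_push_all[of v] unfolding transduces_def by blast
  also have "qstep\<^sup>*\<^sup>* \<dots> (v @ Q', v @ rest)"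
    using assms unfolding transduces_def by blast
  also have "qstep\<^sup>*\<^sup>* \<dots> (Q' @ [], rest)"
    using transduces_pop_all[of v] unfolding transduces_def by blast
  finally show "qstep\<^sup>*\<^sup>* (Q, (v @ w @ v) @ rest) (Q', rest)"
    by simp
qed

lemma accepted_imp_shuffle:
  "qstep\<^sup>*\<^sup>* C ([], []) \<Longrightarrow> \<exists>xs ys. length xs = length ys \<and> fst C @ concat xs = concat ys
     \<and> snd C = concat (map2 (@) xs ys)"
proof (induction rule: converse_rtranclp_induct)
  case base
  show ?case by (intro exI[of _ "[]"]) simp
next
  case (step C C')
  then obtain xs ys where IH: "length xs = length ys" "fst C' @ concat xs = concat ys"
     "snd C' = concat (map2 (@) xs ys)" by blast
  from step(1) show ?case
  proof cases
    case (push Q s x)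
    with IH show ?thesis by (intro exI[of _ "[s] # xs"] exI[of _ "[] # ys"]) simp
  next
    case (pop s Q x)
    with IH show ?thesis by (intro exI[of _ "[] # xs"] exI[of _ "[s] # ys"]) simp
  qed
qed

lemma pw_length: "pw u (length xs) = concat (map (\<lambda>_. u) xs)"
  by (simp add: pw_def map_replicate_const)

lemma pw_add: "pw u (a + b) = pw u a @ pw u b"
  by (simp add: pw_def replicate_add)

lemma replicate_split:
  "i \<le> n \<Longrightarrow> replicate i a @ replicate (n - i) a @ xs = replicate n a @ xs"
  by (metis append.assoc le_add_diff_inverse replicate_add)

lemma transduces_U_blk:
  assumes "i \<le> n"
  shows "transduces (U n) (blk i) (blk (n - i))"
proof -
  have "transduces ([Sa1] @ [Sa1] @ replicate i Sb @ replicate (n - i) Sb @ [Sa2] @ [Sa2])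
           ([Sa1] @ [] @ replicate i Sb @ [] @ [Sa2] @ [])
           ([] @ [Sa1] @ [] @ replicate (n - i) Sb @ [] @ [Sa2])"
    by (intro transduces_append transduces_pop_all transduces_push_all)
  with assms show ?thesis
    by (simp add: U_def blk_def replicate_split)
qed

lemma transduces_blk_fill:
  assumes "i \<le> n"
  shows "transduces (blk n) (replicate (n - i) Sb) (blk i)"
proof -
  have "transduces ([Sa1] @ replicate i Sb @ replicate (n - i) Sb @ [Sa2])
           ([] @ [] @ replicate (n - i) Sb @ [])
           ([Sa1] @ replicate i Sb @ [] @ [Sa2])"
    by (intro transduces_append transduces_pop_all transduces_push_all)
  with assms show ?thesis
    by (simp add: blk_def replicate_split)
qed

lemma transduces_complement:
  assumes "\<forall>i\<in>set xs. i \<le> n"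
  shows "transduces (pw (U n) (length xs)) (blocks xs) (blocks (map (\<lambda>i. n - i) xs))"
  unfolding pw_length using assms
  by (simp add: o_def transduces_concat_map transduces_U_blk)

lemma transduces_complement_back:
  assumes "\<forall>i\<in>set xs. i \<le> n"
  shows "transduces (pw (U n) (length xs)) (blocks (map (\<lambda>i. n - i) xs)) (blocks xs)"
proof -
  have "map (\<lambda>i. n - i) (map (\<lambda>i. n - i) xs) = xs"
    using assms by (induction xs) auto
  with transduces_complement[of "map (\<lambda>i. n - i) xs" n] show ?thesis
    by (simp del: map_map)
qed

lemma transduces_extract:
  assumes "\<forall>i\<in>set A \<union> set C. i \<le> B" and r: "r = length A + length C"
  shows "transduces (pw (U B) r @ blk n @ pw (U B) r) (blocks (A @ n # C))
           (blocks (map (\<lambda>i. B - i) A) @ pw (U B) (length C) @ blocks (map (\<lambda>i. B - i) C)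
              @ pw (U B) (length A))"
proof -
  have "transduces (pw (U B) (length A) @ pw (U B) (length C) @ blk n @ pw (U B) (length C)
                      @ pw (U B) (length A))
           (blocks A @ [] @ blk n @ blocks C @ [])
           (blocks (map (\<lambda>i. B - i) A) @ pw (U B) (length C) @ [] @ blocks (map (\<lambda>i. B - i) C)
              @ pw (U B) (length A))"
    using assms(1)
    by (intro transduces_append transduces_complement transduces_push_all transduces_pop_all) auto
  moreover have "pw (U B) r = pw (U B) (length A) @ pw (U B) (length C)"
    and "pw (U B) r = pw (U B) (length C) @ pw (U B) (length A)"
    by (simp_all add: r pw_add[symmetric] add.commute)
  ultimately show ?thesis
    by simp
qed

lemma transduces_restore:
  assumes "\<forall>i\<in>set A \<union> set C. i \<le> B" and r: "r = length A + length C"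
  shows "transduces (pw (U B) (2 * r))
           (blocks (map (\<lambda>i. B - i) A) @ pw (U B) (length C) @ blocks (map (\<lambda>i. B - i) C)
              @ pw (U B) (length A))
           (blocks (A @ C))"
proof -
  have "transduces (pw (U B) (length A) @ pw (U B) (length C) @ pw (U B) (length C)
                      @ pw (U B) (length A))
           (blocks (map (\<lambda>i. B - i) A) @ pw (U B) (length C) @ blocks (map (\<lambda>i. B - i) C)
              @ pw (U B) (length A))
           (blocks A @ [] @ blocks C @ [])"
    using assms(1)
    by (intro transduces_append transduces_complement_back transduces_pop_all) auto
  moreover have "2 * r = length A + (length C + (length C + length A))"
    using r by simp
  then have "pw (U B) (2 * r) = pw (U B) (length A) @ pw (U B) (length C) @ pw (U B) (length C)
               @ pw (U B) (length A)"
    by (simp only: pw_add)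
  ultimately show ?thesis
    by simp
qed

definition ver_round :: "nat \<Rightarrow> nat list \<Rightarrow> nat \<Rightarrow> sym list" where
  "ver_round m ns k = vv (4*k-3) @ Dk m ns k @ vv (4*k-3) @
       vv (4*k-2) @ Dk m ns k @ vv (4*k-2) @
       vv (4*k-1) @ Ek m ns k @ vv (4*k-1) @
       vv (4*k) @ Fk m ns k @ vv (4*k)"

lemma Ver_eq_ver_rounds: "Ver m ns = concat (map (ver_round m ns) [1..<3 * m + 1])"
  unfolding Ver_def ver_round_def by simp

lemma runs_ver_round:
  assumes "ns ! (k - 1) \<in> set js" and "\<forall>i\<in>set js. i \<le> ns ! (k - 1)"
    and "\<forall>i\<in>set js. i \<le> tp_B m ns" and "length js = Suc (3 * m - k)"
  shows "\<exists>js'. mset js' = mset js - {#ns ! (k - 1)#} \<and> runs (ver_round m ns k) (blocks js) (blocks js')"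
proof -
  define n B r where "n = ns ! (k - 1)" and "B = tp_B m ns" and "r = 3 * m - k"
  obtain A C where js: "js = A @ n # C"
    using split_list[of n js] assms(1) n_def by blast
  have r: "r = length A + length C"
    using assms(4) js r_def by simp
  have le_B: "\<forall>i\<in>set A \<union> set C. i \<le> B"
    using assms(3) js B_def by auto
  have "transduces (pw (U n) (Suc r)) (blocks js) (blocks (map (\<lambda>i. n - i) js))"
    and "transduces (pw (U n) (Suc r)) (blocks (map (\<lambda>i. n - i) js)) (blocks js)"
    using transduces_complement[of js n] transduces_complement_back[of js n] assms(2,4) n_def r_def
    by simp_all
  note D = this[THEN runs_enclosed]
  note E = transduces_extract[OF le_B r, of n, folded js, THEN runs_enclosed]
  note F = transduces_restore[OF le_B r, THEN runs_enclosed]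
  have "runs ((vv (4*k-3) @ pw (U n) (Suc r) @ vv (4*k-3)) @ (vv (4*k-2) @ pw (U n) (Suc r) @ vv (4*k-2))
          @ (vv (4*k-1) @ (pw (U B) r @ blk n @ pw (U B) r) @ vv (4*k-1))
          @ (vv (4*k) @ pw (U B) (2 * r) @ vv (4*k))) (blocks js) (blocks (A @ C))"
    by (rule runs_append[OF D(1) runs_append[OF D(2) runs_append[OF E F]]])
  moreover have "mset (A @ C) = mset js - {#n#}"
    using js by simp
  ultimately show ?thesis
    unfolding ver_round_def Dk_def Ek_def Fk_def n_def B_def r_def
    by (intro exI[of _ "A @ C"]) simp
qed

lemma three_partition_instance_length: "three_partition_instance m ns \<Longrightarrow> length ns = 3 * m"
  unfolding three_partition_instance_def by simp

lemma three_partition_instance_le_B: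
  assumes "three_partition_instance m ns" and "n \<in> set ns"
  shows "n \<le> tp_B m ns"
proof -
  have "real n < real (tp_B m ns) / 2"
    using assms unfolding three_partition_instance_def by blast
  then show ?thesis
    by linarith
qed

lemma runs_ver_rounds_from:
  assumes inst: "three_partition_instance m ns" and sorted: "sorted_wrt (\<ge>) ns"
    and "j \<le> 3 * m" and "mset js = mset (drop j ns)"
  shows "runs (concat (map (ver_round m ns) [Suc j..<3 * m + 1])) (blocks js) []"
  using assms(3,4)
proof (induction j arbitrary: js rule: inc_induct)
  case base
  then show ?case
    using three_partition_instance_length[OF inst] by (simp add: runs_def)
next
  case (step j)
  have len: "length ns = 3 * m"
    using three_partition_instance_length[OF inst] .
  define n where "n = ns ! j"
  have drop: "drop j ns = n # drop (Suc j) ns"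
    using step.hyps len by (simp add: n_def Cons_nth_drop_Suc)
  have set_js: "set js = set (drop j ns)"
    using step.prems by (metis set_mset_mset)
  have "sorted_wrt (\<ge>) (drop j ns)"
    using sorted by (rule sorted_wrt_drop)
  then have le_n: "\<forall>i\<in>set js. i \<le> n"
    using set_js drop by auto
  have le_B: "\<forall>i\<in>set js. i \<le> tp_B m ns"
    using set_js three_partition_instance_le_B[OF inst] by (metis in_set_dropD)
  have "length js = Suc (3 * m - Suc j)"
    using step.prems step.hyps len by (metis length_drop size_mset Suc_diff_Suc)
  then obtain js' where js': "mset js' = mset js - {#n#}"
    and round: "runs (ver_round m ns (Suc j)) (blocks js) (blocks js')"
    using runs_ver_round[where m = m and ns = ns and k = "Suc j" and js = js] le_n le_B set_js drop
    by (auto simp: n_def)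
  have "mset js' = mset (drop (Suc j) ns)"
    using js' step.prems drop by simp
  then have "runs (concat (map (ver_round m ns) [Suc (Suc j)..<3 * m + 1])) (blocks js') []"
    by (rule step.IH)
  moreover have "[Suc j..<3 * m + 1] = Suc j # [Suc (Suc j)..<3 * m + 1]"
    using step.hyps by (simp add: upt_conv_Cons)
  ultimately show ?case
    using runs_append[OF round] by (simp only: list.map concat.simps)
qed

lemma accepted_permuted_blocks:
  assumes "three_partition_instance m ns" and "sorted_wrt (\<ge>) ns" and "mset is = mset ns"
  shows "accepted (blocks is, Ver m ns)"
proof -
  have "runs (concat (map (ver_round m ns) [1..<3 * m + 1])) (blocks is) []"
    using runs_ver_rounds_from[OF assms(1,2) le0] assms(3) by simp
  then show ?thesis
    unfolding accepted_def Ver_eq_ver_rounds runs_def by (metis append_Nil2)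
qed

lemma sum_list_le_length_mult: "\<forall>x\<in>set g. x \<le> B \<Longrightarrow> sum_list g \<le> length g * (B::nat)"
  by (induction g) auto

lemma transduces_blk_fill_list:
  assumes "\<forall>x\<in>set g. x \<le> B"
  shows "transduces (pw (blk B) (length g)) (replicate (length g * B - sum_list g) Sb) (blocks g)"
  using assms
proof (induction g)
  case Nil
  show ?case by (simp add: pw_def transduces_Nil)
next
  case (Cons x g)
  then have "x \<le> B" and "sum_list g \<le> length g * B"
    by (simp_all add: sum_list_le_length_mult)
  then have "replicate (length (x # g) * B - sum_list (x # g)) Sb
               = replicate (B - x) Sb @ replicate (length g * B - sum_list g) Sb"
    by (simp add: replicate_add[symmetric])
  with transduces_append[OF transduces_blk_fill[OF \<open>x \<le> B\<close>] Cons.IH] Cons.prems show ?case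
    by (simp add: pw_def)
qed

lemma runs_Load_Dist:
  assumes "length gs = m" and "\<forall>g\<in>set gs. length g = 3 \<and> sum_list g = tp_B m ns"
    and "\<forall>x\<in>set (concat gs). x \<le> tp_B m ns"
  shows "runs (Load m ns @ Dist m ns) [] (blocks (concat gs))"
proof -
  let ?B = "tp_B m ns"
  have "transduces (concat (map (\<lambda>_. pw (blk ?B) 3 @ [Se]) gs))
          (concat (map (\<lambda>_. replicate (2 * ?B) Sb @ [Se]) gs)) (concat (map blocks gs))"
  proof (rule transduces_concat_map)
    fix g assume "g \<in> set gs"
    with assms(2,3) transduces_blk_fill_list[of g ?B]
    have "transduces (pw (blk ?B) 3) (replicate (2 * ?B) Sb) (blocks g)"
      by auto
    from transduces_append[OF this transduces_pop_all[of "[Se]"]]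
    show "transduces (pw (blk ?B) 3 @ [Se]) (replicate (2 * ?B) Sb @ [Se]) (blocks g)"
      by simp
  qed
  moreover have "concat (map blocks gs) = blocks (concat gs)"
    by (induction gs) simp_all
  ultimately have "transduces (Dist m ns) (Load m ns) (blocks (concat gs))"
    using assms(1) transduces_append[OF transduces_pop_all[of "[Se0]"]]
    by (simp add: Load_def Dist_def map_replicate_const)
  then show ?thesis
    using runs_append[OF runs_of_transduces[OF transduces_push_all]] runs_of_transduces by blast
qed

lemma mset_concat_fibres:
  "mset (concat (map (\<lambda>j. filter (\<lambda>i. f i = j) xs) [0..<k])) = mset (filter (\<lambda>i. f i < k) xs)"
proof (induction k)
  case (Suc k)
  have "mset (filter (\<lambda>i. f i < k) xs) + mset (filter (\<lambda>i. f i = k) xs)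
          = mset (filter (\<lambda>i. f i < Suc k) xs)"
    by (induction xs) auto
  with Suc show ?case
    by simp
qed simp

lemma three_partition_yes_groups:
  assumes "three_partition_yes m ns"
  obtains gs where "length gs = m" and "\<forall>g\<in>set gs. length g = 3 \<and> sum_list g = tp_B m ns"
    and "mset (concat gs) = mset ns"
proof -
  have len: "length ns = 3 * m"
    using assms three_partition_instance_length unfolding three_partition_yes_def by blast
  obtain f :: "nat \<Rightarrow> nat" where f_lt: "\<forall>i < 3 * m. f i < m"
    and f_fibres: "\<forall>j < m. card {i. i < 3 * m \<and> f i = j} = 3 \<and>
                 (\<Sum>i\<in>{i. i < 3 * m \<and> f i = j}. ns ! i) = tp_B m ns"
    using assms unfolding three_partition_yes_def by blast
  define fibre where "fibre j = filter (\<lambda>i. f i = j) [0..<3 * m]" for j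
  define gs where "gs = map (\<lambda>j. map (nth ns) (fibre j)) [0..<m]"
  have set_fibre: "set (fibre j) = {i. i < 3 * m \<and> f i = j}" for j
    by (auto simp: fibre_def)
  have "length (fibre j) = card {i. i < 3 * m \<and> f i = j}" for j
    unfolding fibre_def length_filter_conv_card by (rule arg_cong[where f = card]) auto
  moreover have "sum_list (map (nth ns) (fibre j)) = (\<Sum>i\<in>{i. i < 3 * m \<and> f i = j}. ns ! i)" for j
    unfolding set_fibre[symmetric] by (simp add: sum_list_distinct_conv_sum_set fibre_def)
  ultimately have "\<forall>g\<in>set gs. length g = 3 \<and> sum_list g = tp_B m ns"
    using f_fibres by (auto simp: gs_def)
  moreover have "mset (concat gs) = mset ns"
  proof -
    have "mset (concat gs) = image_mset (nth ns) (mset (concat (map fibre [0..<m])))"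
      by (simp add: gs_def map_concat o_def flip: mset_map)
    also have "mset (concat (map fibre [0..<m])) = mset (filter (\<lambda>i. f i < m) [0..<3 * m])"
      unfolding fibre_def by (rule mset_concat_fibres)
    also have "filter (\<lambda>i. f i < m) [0..<3 * m] = [0..<length ns]"
      using f_lt len by (simp add: filter_id_conv)
    finally show ?thesis
      by (metis map_nth mset_map)
  qed
  moreover have "length gs = m"
    by (simp add: gs_def)
  ultimately show ?thesis
    using that by blast
qed

theorem lemma5:
  fixes m :: nat and ns :: "nat list"
  assumes "three_partition_instance m ns"
    and "sorted_wrt (\<ge>) ns"
  shows "(\<forall>is. mset is = mset ns \<longrightarrow> accepted (concat (map blk is), Ver m ns))
       \<and> (three_partition_yes m ns \<longrightarrow>
            qstep\<^sup>*\<^sup>* ([], wS m ns) ([], []) \<and> is_square (wS m ns))"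
proof (intro conjI allI impI)
  fix "is" assume "mset is = mset ns"
  with assms show "accepted (blocks is, Ver m ns)"
    by (rule accepted_permuted_blocks)
next
  assume "three_partition_yes m ns"
  then obtain gs where gs: "length gs = m" "\<forall>g\<in>set gs. length g = 3 \<and> sum_list g = tp_B m ns"
    and perm: "mset (concat gs) = mset ns"
    by (rule three_partition_yes_groups)
  have "\<forall>x\<in>set (concat gs). x \<le> tp_B m ns"
    using three_partition_instance_le_B[OF assms(1)] perm by (metis set_mset_mset)
  with gs have "runs (Load m ns @ Dist m ns) [] (blocks (concat gs))"
    by (rule runs_Load_Dist)
  moreover have "accepted (blocks (concat gs), Ver m ns)"
    using assms perm by (rule accepted_permuted_blocks)
  ultimately show run: "qstep\<^sup>*\<^sup>* ([], wS m ns) ([], [])"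
    unfolding runs_def accepted_def wS_def by (metis append.assoc rtranclp_trans)
  from accepted_imp_shuffle[OF run] obtain xs ys where
    "length xs = length ys" "concat xs = concat ys" "wS m ns = concat (map2 (@) xs ys)"
    by auto
  then show "is_square (wS m ns)"
    unfolding is_square_def by (intro exI[of _ "concat xs"] exI[of _ xs] exI[of _ ys]) simp
qed

end
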